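(* Let $m\ge1$, $y\in\mathbb{R}^{2m+1}_+$ and $\mathbf{Y}\in\boldsymbol{\mathcal{Y}}$. Then the problem of minimizing $\mathcal{I}(\mathbf{Y}\|\mathbf{W})$ over $\mathbf{W}\in\boldsymbol{\mathcal{W}}$ has the explicit minimizer $\mathbf{W}^\star=\mathbf{W}^\star(\mathbf{Y})$, namely the element of $\boldsymbol{\mathcal{W}}$ associated with the vector $x^\star\in\mathbb{R}^{m+1}_+$ given by $$x^\star_j=\frac{\widehat{\mathbf{Y}}_j}{2\sqrt{\sum_{i=0}^{2m}y_i}},\qquad \widehat{\mathbf{Y}}_j=\sum_{i=0}^m\mathbf{Y}_{i+j,i}+\sum_{i=j}^{j+m}\mathbf{Y}_{ij},\qquad j=0,\dots,m.$$ Moreover, for every $\mathbf{W}\in\boldsymbol{\mathcal{W}}$ the Pythagorean identity $$\mathcal{I}(\mathbf{Y}\|\mathbf{W})=\mathcal{I}(\mathbf{Y}\|\mathbf{W}^\star)+\mathcal{I}(\mathbf{W}^\star\|\mathbf{W})$$ holds.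
   Context: Matrices are indexed by rows $i=0,\dots,2m$ and columns $j=0,\dots,m$. $\boldsymbol{\mathcal{Y}}$ is the set of $\mathbf{Y}\in\mathbb{R}^{(2m+1)\times(m+1)}_+$ with $\mathbf{Y}_{ij}=0$ for $i<j$ and for $i>j+m$, and with row sums $\sum_j\mathbf{Y}_{ij}=y_i$ for all $i$. $\boldsymbol{\mathcal{W}}$ is the set of matrices $\mathbf{W}\in\mathbb{R}^{(2m+1)\times(m+1)}_+$ of the form $\mathbf{W}_{ij}=x_{i-j}x_j$ for $0\le j\le m$, $j\le i\le j+m$, and $\mathbf{W}_{ij}=0$ otherwise, for some $x\in\mathbb{R}^{m+1}_+$ (the element of $\boldsymbol{\mathcal{W}}$ "associated with" $x$). For nonnegative arrays $M,N$ of the same size, $\mathcal{I}(M\|N)=\sum_{i,j}\big(M_{ij}\log\frac{M_{ij}}{N_{ij}}-M_{ij}+N_{ij}\big)$ (convention $0\log0=0$; $+\infty$ if some $M_{ij}>0=N_{ij}$). *)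

theory Defs
  imports "HOL-Analysis.Analysis"
begin

text \<open>Matrices of size (2m+1) x (m+1) are represented as functions
  nat => nat => real; only the entries with i <= 2m, j <= m are relevant.\<close>

definition Ycal :: "nat \<Rightarrow> (nat \<Rightarrow> real) \<Rightarrow> (nat \<Rightarrow> nat \<Rightarrow> real) set" where
  "Ycal m y = {Y. (\<forall>i\<le>2*m. \<forall>j\<le>m. Y i j \<ge> 0)
              \<and> (\<forall>i\<le>2*m. \<forall>j\<le>m. (i < j \<or> i > j + m) \<longrightarrow> Y i j = 0)
              \<and> (\<forall>i\<le>2*m. (\<Sum>j\<le>m. Y i j) = y i)}"

definition assocW :: "nat \<Rightarrow> (nat \<Rightarrow> real) \<Rightarrow> nat \<Rightarrow> nat \<Rightarrow> real" where
  "assocW m x i j = (if j \<le> m \<and> j \<le> i \<and> i \<le> j + m then x (i - j) * x j else 0)"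

definition Wcal :: "nat \<Rightarrow> (nat \<Rightarrow> nat \<Rightarrow> real) set" where
  "Wcal m = {assocW m x | x. \<forall>j\<le>m. x j \<ge> 0}"

text \<open>One summand of the I-divergence, with 0 log 0 = 0 and value +infinity
  when a > 0 = b.\<close>
definition idiv_term :: "real \<Rightarrow> real \<Rightarrow> ereal" where
  "idiv_term a b = (if a = 0 then ereal b
                    else if b = 0 then \<infinity>
                    else ereal (a * ln (a / b) - a + b))"

definition idiv :: "nat \<Rightarrow> (nat \<Rightarrow> nat \<Rightarrow> real) \<Rightarrow> (nat \<Rightarrow> nat \<Rightarrow> real) \<Rightarrow> ereal" where
  "idiv m M N = (\<Sum>i\<le>2*m. \<Sum>j\<le>m. idiv_term (M i j) (N i j))"

definition Yhat :: "nat \<Rightarrow> (nat \<Rightarrow> nat \<Rightarrow> real) \<Rightarrow> nat \<Rightarrow> real" where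
  "Yhat m Y j = (\<Sum>i\<le>m. Y (i + j) i) + (\<Sum>i=j..j+m. Y i j)"

end

theory Submission
  imports Defs
begin

text \<open>
  For banded Z and any vector a, \<open>\<Sum>i j. Z i j * (a (i - j) + a j) = \<Sum>k. Yhat m Z k * a k\<close>.
  With \<open>a = ln \<circ> x\<close> this turns \<open>\<Sum>i j. Z i j * ln (assocW m x i j)\<close> into
  \<open>\<Sum>k. Yhat m Z k * ln (x k)\<close>: against elements of W, the logarithmic part of the
  divergence sees Z only through its moments \<open>Yhat m Z\<close>.  As
  \<open>Yhat m (assocW m x) k = 2 * (\<Sum>l. x l) * x k\<close>, the vector xstar is the one for which
  Wstar has the same moments as Y.  The defect of the Pythagorean identity,
  \<open>\<Sum>i j. (Wstar i j - Y i j) * (ln (W i j) - ln (Wstar i j))\<close>, therefore vanishes, and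
  minimality follows from nonnegativity of the divergence.  If \<open>x k = 0\<close> while
  \<open>Yhat m Y k > 0\<close>, both sides of the identity are infinite.
\<close>

definition banded :: "nat \<Rightarrow> (nat \<Rightarrow> nat \<Rightarrow> real) \<Rightarrow> bool" where
  "banded m Z \<longleftrightarrow> (\<forall>i\<le>2*m. \<forall>j\<le>m. (i < j \<or> i > j + m) \<longrightarrow> Z i j = 0)"

definition nonneg_mat :: "nat \<Rightarrow> (nat \<Rightarrow> nat \<Rightarrow> real) \<Rightarrow> bool" where
  "nonneg_mat m Z \<longleftrightarrow> (\<forall>i\<le>2*m. \<forall>j\<le>m. 0 \<le> Z i j)"

lemma banded_assocW: "banded m (assocW m x)"
  by (auto simp: banded_def assocW_def)

lemma nonneg_mat_assocW: "\<forall>j\<le>m. 0 \<le> x j \<Longrightarrow> nonneg_mat m (assocW m x)"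
  by (auto simp: nonneg_mat_def assocW_def)

lemma sum_shift_interval: "(\<Sum>i=j..j+m. f i) = (\<Sum>i\<le>m. f (i + j :: nat))"
  using sum.shift_bounds_cl_nat_ivl[of f 0 j m] by (simp add: atLeast0AtMost add.commute)

lemma Yhat_eq_diagonal_sums: "Yhat m Z j = (\<Sum>i\<le>m. Z (i + j) i) + (\<Sum>i\<le>m. Z (i + j) j)"
  by (simp add: Yhat_def sum_shift_interval)

lemma sum_column_banded:
  assumes "banded m Z" "j \<le> m"
  shows "(\<Sum>i\<le>2*m. Z i j * f i) = (\<Sum>k\<le>m. Z (k + j) j * f (k + j))"
proof -
  have "(\<Sum>i\<le>2*m. Z i j * f i) = (\<Sum>i=j..j+m. Z i j * f i)"
    by (rule sum.mono_neutral_right) (use assms in \<open>auto simp: banded_def\<close>)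
  then show ?thesis by (simp add: sum_shift_interval)
qed

lemma sum_banded_mult_pair:
  assumes "banded m Z"
  shows "(\<Sum>i\<le>2*m. \<Sum>j\<le>m. Z i j * (a (i - j) + a j)) = (\<Sum>k\<le>m. Yhat m Z k * a k)"
proof -
  have "(\<Sum>i\<le>2*m. \<Sum>j\<le>m. Z i j * (a (i - j) + a j))
      = (\<Sum>j\<le>m. \<Sum>k\<le>m. Z (k + j) j * (a k + a j))"
    using sum_column_banded[OF assms] by (subst sum.swap) simp
  also have "\<dots> = (\<Sum>k\<le>m. \<Sum>j\<le>m. Z (j + k) j * a k) + (\<Sum>j\<le>m. \<Sum>k\<le>m. Z (k + j) j * a j)"
    by (subst sum.swap) (simp add: distrib_left sum.distrib add.commute)
  also have "\<dots> = (\<Sum>k\<le>m. Yhat m Z k * a k)"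
    by (simp add: Yhat_eq_diagonal_sums distrib_right sum.distrib sum_distrib_right)
  finally show ?thesis .
qed

lemma sum_Yhat:
  assumes "banded m Z"
  shows "(\<Sum>k\<le>m. Yhat m Z k) = 2 * (\<Sum>i\<le>2*m. \<Sum>j\<le>m. Z i j)"
  using sum_banded_mult_pair[OF assms, of "\<lambda>_. 1"]
  by (simp add: sum_distrib_left mult.commute)

lemma Yhat_nonneg: "nonneg_mat m Z \<Longrightarrow> j \<le> m \<Longrightarrow> 0 \<le> Yhat m Z j"
  unfolding Yhat_def nonneg_mat_def by (intro add_nonneg_nonneg sum_nonneg) auto

lemma entry_le_Yhat:
  assumes "nonneg_mat m Z" "j \<le> m" "j \<le> i" "i \<le> j + m"
  shows "Z i j \<le> Yhat m Z (i - j)" "Z i j \<le> Yhat m Z j"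
proof -
  have "Z (j + (i - j)) j \<le> (\<Sum>l\<le>m. Z (l + (i - j)) l)"
    by (rule member_le_sum) (use assms in \<open>auto simp: nonneg_mat_def\<close>)
  moreover have "Z (i - j + j) j \<le> (\<Sum>l\<le>m. Z (l + j) j)"
    by (rule member_le_sum) (use assms in \<open>auto simp: nonneg_mat_def\<close>)
  moreover have "0 \<le> (\<Sum>l\<le>m. Z (l + (i - j)) (i - j))" "0 \<le> (\<Sum>l\<le>m. Z (l + j) l)"
    using assms by (auto simp: nonneg_mat_def intro!: sum_nonneg)
  ultimately show "Z i j \<le> Yhat m Z (i - j)" "Z i j \<le> Yhat m Z j"
    using assms(3) by (auto simp: Yhat_eq_diagonal_sums add.commute)
qed

lemma Yhat_assocW:
  assumes "k \<le> m"
  shows "Yhat m (assocW m x) k = 2 * (\<Sum>l\<le>m. x l) * x k"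
  using assms
  by (simp add: Yhat_eq_diagonal_sums assocW_def sum_distrib_left sum_distrib_right mult_ac)

lemma support_assocW:
  assumes "nonneg_mat m Z" "banded m Z" "\<forall>k\<le>m. 0 < Yhat m Z k \<longrightarrow> 0 < x k"
    and "i \<le> 2*m" "j \<le> m" "Z i j \<noteq> 0"
  shows "j \<le> i" "i \<le> j + m" "0 < x (i - j)" "0 < x j"
proof -
  show band: "j \<le> i" "i \<le> j + m"
    using assms(2,4-6) unfolding banded_def by (meson not_le)+
  have "0 < Z i j"
    using assms(1,4-6) by (auto simp: nonneg_mat_def order_le_less)
  then have "0 < Yhat m Z (i - j)" "0 < Yhat m Z j"
    using entry_le_Yhat[OF assms(1,5) band] by linarith+
  then show "0 < x (i - j)" "0 < x j"
    using assms(3,5) band by auto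
qed

lemma assocW_pos_on_support:
  assumes "nonneg_mat m Z" "banded m Z" "\<forall>k\<le>m. 0 < Yhat m Z k \<longrightarrow> 0 < x k"
    and "i \<le> 2*m" "j \<le> m" "Z i j \<noteq> 0"
  shows "0 < assocW m x i j"
  using support_assocW[OF assms] assms(5) by (simp add: assocW_def)

lemma sum_mult_ln_assocW:
  assumes "nonneg_mat m Z" "banded m Z" "\<forall>k\<le>m. 0 < Yhat m Z k \<longrightarrow> 0 < x k"
  shows "(\<Sum>i\<le>2*m. \<Sum>j\<le>m. Z i j * ln (assocW m x i j)) = (\<Sum>k\<le>m. Yhat m Z k * ln (x k))"
proof -
  have "Z i j * ln (assocW m x i j) = Z i j * (ln (x (i - j)) + ln (x j))"
    if "i \<le> 2*m" "j \<le> m" for i j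
  proof (cases "Z i j = 0")
    case False
    from support_assocW[OF assms that False] that show ?thesis
      by (simp add: assocW_def ln_mult)
  qed simp
  then have "(\<Sum>i\<le>2*m. \<Sum>j\<le>m. Z i j * ln (assocW m x i j))
      = (\<Sum>i\<le>2*m. \<Sum>j\<le>m. Z i j * (ln (x (i - j)) + ln (x j)))"
    by (intro sum.cong) auto
  also have "\<dots> = (\<Sum>k\<le>m. Yhat m Z k * ln (x k))"
    by (rule sum_banded_mult_pair[OF assms(2)])
  finally show ?thesis .
qed

lemma idiv_term_nonneg:
  assumes "0 \<le> a" "0 \<le> b"
  shows "0 \<le> idiv_term a b"
proof (cases "a = 0 \<or> b = 0")
  case False
  then have "0 < a" "0 < b" using assms by auto
  then have "a * ln (b / a) \<le> a * (b / a - 1)"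
    by (intro mult_left_mono ln_le_minus_one) auto
  moreover have "a * (b / a - 1) = b - a" "ln (a / b) = - ln (b / a)"
    using \<open>0 < a\<close> \<open>0 < b\<close> by (simp_all add: field_simps ln_div)
  ultimately have "a - b \<le> a * ln (a / b)"
    by simp
  with False show ?thesis by (simp add: idiv_term_def)
qed (use assms in \<open>auto simp: idiv_term_def\<close>)

lemma idiv_nonneg: "nonneg_mat m M \<Longrightarrow> nonneg_mat m N \<Longrightarrow> 0 \<le> idiv m M N"
  unfolding idiv_def nonneg_mat_def by (intro sum_nonneg idiv_term_nonneg) auto

lemma idiv_eq_infinity:
  assumes "i \<le> 2*m" "j \<le> m" "0 < M i j" "N i j = 0"
  shows "idiv m M N = \<infinity>"
proof -
  have "(\<Sum>j\<le>m. idiv_term (M i j) (N i j)) = \<infinity>"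
    using assms by (subst sum_Pinfty) (auto simp: idiv_term_def intro!: bexI[of _ j])
  then show ?thesis
    unfolding idiv_def using assms by (subst sum_Pinfty) (auto intro!: bexI[of _ i])
qed

definition idiv_real_term :: "real \<Rightarrow> real \<Rightarrow> real" where
  "idiv_real_term a b = a * ln a - a * ln b - a + b"

lemma idiv_eq_real_sum:
  assumes "nonneg_mat m M" "\<forall>i\<le>2*m. \<forall>j\<le>m. M i j \<noteq> 0 \<longrightarrow> 0 < N i j"
  shows "idiv m M N = ereal (\<Sum>i\<le>2*m. \<Sum>j\<le>m. idiv_real_term (M i j) (N i j))"
proof -
  have "idiv_term (M i j) (N i j) = ereal (idiv_real_term (M i j) (N i j))"
    if "i \<le> 2*m" "j \<le> m" for i j
  proof (cases "M i j = 0")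
    case False
    with assms that have "0 < M i j" "0 < N i j"
      by (auto simp: nonneg_mat_def order_le_less)
    then show ?thesis
      by (simp add: idiv_term_def idiv_real_term_def ln_div algebra_simps)
  qed (simp add: idiv_term_def idiv_real_term_def)
  then show ?thesis
    by (simp add: idiv_def)
qed

lemma idiv_real_term_split:
  "idiv_real_term a c = idiv_real_term a b + idiv_real_term b c + (b - a) * (ln c - ln b)"
  by (simp add: idiv_real_term_def algebra_simps)

lemma idiv_pythagorean:
  assumes "nonneg_mat m M" "nonneg_mat m N"
    and "\<forall>i\<le>2*m. \<forall>j\<le>m. M i j \<noteq> 0 \<longrightarrow> 0 < N i j"
    and "\<forall>i\<le>2*m. \<forall>j\<le>m. M i j \<noteq> 0 \<longrightarrow> 0 < P i j"
    and "\<forall>i\<le>2*m. \<forall>j\<le>m. N i j \<noteq> 0 \<longrightarrow> 0 < P i j"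
    and "(\<Sum>i\<le>2*m. \<Sum>j\<le>m. M i j * ln (P i j)) = (\<Sum>i\<le>2*m. \<Sum>j\<le>m. N i j * ln (P i j))"
    and "(\<Sum>i\<le>2*m. \<Sum>j\<le>m. M i j * ln (N i j)) = (\<Sum>i\<le>2*m. \<Sum>j\<le>m. N i j * ln (N i j))"
  shows "idiv m M P = idiv m M N + idiv m N P"
proof -
  have split: "idiv_real_term (M i j) (P i j) = idiv_real_term (M i j) (N i j)
      + idiv_real_term (N i j) (P i j) + (N i j - M i j) * (ln (P i j) - ln (N i j))" for i j
    by (rule idiv_real_term_split)
  have "(\<Sum>i\<le>2*m. \<Sum>j\<le>m. (N i j - M i j) * (ln (P i j) - ln (N i j))) = 0"
    using assms(6,7) by (simp add: algebra_simps sum.distrib sum_subtractf)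
  then show ?thesis
    unfolding idiv_eq_real_sum[OF assms(1,3)] idiv_eq_real_sum[OF assms(1,4)]
      idiv_eq_real_sum[OF assms(2,5)] split sum.distrib
    by simp
qed

lemma idiv_assocW_eq_infinity:
  assumes "k \<le> m" "0 < Yhat m Z k" "x k = 0"
  shows "idiv m Z (assocW m x) = \<infinity>"
proof -
  have "\<exists>i\<le>m. 0 < Z (i + k) i \<or> 0 < Z (i + k) k"
  proof (rule ccontr)
    assume "\<not> ?thesis"
    then have "(\<Sum>i\<le>m. Z (i + k) i) \<le> 0" "(\<Sum>i\<le>m. Z (i + k) k) \<le> 0"
      by (auto intro!: sum_nonpos simp: not_less)
    with assms(2) show False
      by (simp add: Yhat_eq_diagonal_sums)
  qed
  then obtain i where "i \<le> m" "0 < Z (i + k) i \<or> 0 < Z (i + k) k"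
    by blast
  with assms(1,3) show ?thesis
    by (auto intro: idiv_eq_infinity[of "i + k" m i] idiv_eq_infinity[of "i + k" m k]
        simp: assocW_def)
qed

lemma idiv_pythagorean_assocW:
  assumes Z: "nonneg_mat m Z" "banded m Z"
    and x: "\<forall>j\<le>m. 0 \<le> x j" and z: "\<forall>j\<le>m. 0 \<le> z j"
    and moments: "\<forall>k\<le>m. Yhat m (assocW m z) k = Yhat m Z k"
  shows "idiv m Z (assocW m x) = idiv m Z (assocW m z) + idiv m (assocW m z) (assocW m x)"
proof -
  define V where "V = assocW m z"
  have V: "nonneg_mat m V" "banded m V"
    using z by (simp_all add: V_def nonneg_mat_assocW banded_assocW)
  have z_pos: "\<forall>k\<le>m. 0 < Yhat m Z k \<longrightarrow> 0 < z k"
  proof (intro allI impI)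
    fix k assume "k \<le> m" "0 < Yhat m Z k"
    with moments Yhat_assocW[OF \<open>k \<le> m\<close>, of z] have "z k \<noteq> 0"
      by auto
    moreover have "0 \<le> z k"
      using z \<open>k \<le> m\<close> by blast
    ultimately show "0 < z k"
      by linarith
  qed
  have V_z_pos: "\<forall>k\<le>m. 0 < Yhat m V k \<longrightarrow> 0 < z k"
    using z_pos moments by (simp add: V_def)
  consider (infinite) k where "k \<le> m" "0 < Yhat m Z k" "x k = 0"
    | (finite) "\<forall>k\<le>m. 0 < Yhat m Z k \<longrightarrow> 0 < x k"
    using x by (metis le_less)
  then show ?thesis
  proof cases
    case infinite
    then have "idiv m Z (assocW m x) = \<infinity>" "idiv m V (assocW m x) = \<infinity>"
      using Z V moments by (simp_all add: V_def idiv_assocW_eq_infinity)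
    moreover have "0 \<le> idiv m Z V"
      using Z V by (simp add: idiv_nonneg)
    ultimately show ?thesis
      by (simp add: V_def)
  next
    case finite
    then have V_finite: "\<forall>k\<le>m. 0 < Yhat m V k \<longrightarrow> 0 < x k"
      using moments by (simp add: V_def)
    show ?thesis
      unfolding V_def[symmetric]
    proof (rule idiv_pythagorean)
      show "(\<Sum>i\<le>2*m. \<Sum>j\<le>m. Z i j * ln (assocW m x i j))
          = (\<Sum>i\<le>2*m. \<Sum>j\<le>m. V i j * ln (assocW m x i j))"
        using sum_mult_ln_assocW[OF Z finite] sum_mult_ln_assocW[OF V V_finite] moments
        by (simp add: V_def)
      show "(\<Sum>i\<le>2*m. \<Sum>j\<le>m. Z i j * ln (V i j)) = (\<Sum>i\<le>2*m. \<Sum>j\<le>m. V i j * ln (V i j))"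
        using sum_mult_ln_assocW[OF Z z_pos] sum_mult_ln_assocW[OF V V_z_pos] moments
        by (simp add: V_def)
    qed (use Z V finite V_finite z_pos in
        \<open>auto simp: V_def intro: assocW_pos_on_support\<close>)
  qed
qed

lemma Yhat_assocW_rescaled_Yhat:
  assumes "nonneg_mat m Z" "banded m Z" "k \<le> m"
  shows "Yhat m (assocW m (\<lambda>j. Yhat m Z j / (2 * sqrt (\<Sum>i\<le>2*m. \<Sum>j\<le>m. Z i j)))) k
    = Yhat m Z k"
proof -
  define S where "S = (\<Sum>i\<le>2*m. \<Sum>j\<le>m. Z i j)"
  have total: "(\<Sum>l\<le>m. Yhat m Z l) = 2 * S"
    using sum_Yhat[OF assms(2)] by (simp add: S_def)
  have bounds: "0 \<le> Yhat m Z k" "Yhat m Z k \<le> 2 * S"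
    using assms Yhat_nonneg member_le_sum[of k "{..m}" "Yhat m Z"] total by auto
  have "Yhat m (assocW m (\<lambda>j. Yhat m Z j / (2 * sqrt S))) k = Yhat m Z k"
  proof (cases "S = 0")
    case True
    with bounds have "Yhat m Z k = 0"
      by linarith
    with assms(3) show ?thesis
      by (simp add: Yhat_assocW)
  next
    case False
    with bounds have "0 < S"
      by linarith
    then have "(\<Sum>l\<le>m. Yhat m Z l / (2 * sqrt S)) = sqrt S"
      by (simp add: sum_divide_distrib[symmetric] total real_div_sqrt)
    with \<open>0 < S\<close> assms(3) show ?thesis
      by (simp add: Yhat_assocW)
  qed
  then show ?thesis
    by (simp add: S_def)
qed

theorem lemma2:
  fixes m :: nat and y :: "nat \<Rightarrow> real" and Y :: "nat \<Rightarrow> nat \<Rightarrow> real"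
  assumes "m \<ge> 1"
    and "\<forall>i\<le>2*m. y i \<ge> 0"
    and "Y \<in> Ycal m y"
  shows "let xstar = (\<lambda>j. Yhat m Y j / (2 * sqrt (\<Sum>i\<le>2*m. y i)));
             Wstar = assocW m xstar
         in (\<forall>j\<le>m. xstar j \<ge> 0) \<and> Wstar \<in> Wcal m
            \<and> (\<forall>W\<in>Wcal m. idiv m Y Wstar \<le> idiv m Y W)
            \<and> (\<forall>W\<in>Wcal m. idiv m Y W = idiv m Y Wstar + idiv m Wstar W)"
proof -
  have Y: "nonneg_mat m Y" "banded m Y" and rows: "\<forall>i\<le>2*m. (\<Sum>j\<le>m. Y i j) = y i"
    using assms(3) by (auto simp: Ycal_def nonneg_mat_def banded_def)
  define xstar where "xstar = (\<lambda>j. Yhat m Y j / (2 * sqrt (\<Sum>i\<le>2*m. y i)))"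
  define Wstar where "Wstar = assocW m xstar"
  have "0 \<le> (\<Sum>i\<le>2*m. y i)"
    using assms(2) by (auto intro: sum_nonneg)
  then have xstar: "\<forall>j\<le>m. 0 \<le> xstar j"
    using Yhat_nonneg[OF Y(1)] by (simp add: xstar_def)
  have "(\<Sum>i\<le>2*m. y i) = (\<Sum>i\<le>2*m. \<Sum>j\<le>m. Y i j)"
    using rows by simp
  then have moments: "\<forall>k\<le>m. Yhat m Wstar k = Yhat m Y k"
    using Yhat_assocW_rescaled_Yhat[OF Y] by (simp add: Wstar_def xstar_def)
  have pythagorean: "idiv m Y W = idiv m Y Wstar + idiv m Wstar W" if "W \<in> Wcal m" for W
    using that idiv_pythagorean_assocW[OF Y _ xstar] moments
    by (auto simp: Wcal_def Wstar_def)
  have "idiv m Y Wstar \<le> idiv m Y W" if "W \<in> Wcal m" for W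
  proof -
    have "0 \<le> idiv m Wstar W"
      using that xstar by (auto simp: Wcal_def Wstar_def idiv_nonneg nonneg_mat_assocW)
    then show ?thesis
      using pythagorean[OF that] by (simp add: add_increasing2)
  qed
  moreover have "Wstar \<in> Wcal m"
    using xstar by (auto simp: Wcal_def Wstar_def)
  ultimately show ?thesis
    unfolding Let_def xstar_def[symmetric] Wstar_def[symmetric] using xstar pythagorean by blast
qed

end
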